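(* Let $a,b\ge2$ and let $\alpha,\beta$ be integers with $\alpha<-b+1$ and $\beta>a-1$. Let $M_\sigma$ be the Poisson module over $\Lambda(a,b)$ with parameters $(\alpha,\beta)$ described in the context. Then $HP_0(\Lambda(a,b),M_\sigma)\cong\mathbb C$ and $HP_2(\Lambda(a,b),M_\sigma)=0$.
   Context: For integers $a,b\geq 2$, $\Lambda(a,b):=\mathbb C[X,Y]/(X^a,Y^b)$ with basis $X^iY^j$ ($0\le i\le a-1$, $0\le j\le b-1$) and Poisson bracket determined by $\{X,Y\}=XY$. For parameters $\alpha,\beta$, $M_\sigma$ is $\Lambda(a,b)$ as a $\Lambda(a,b)$-module, with external bracket $\{-,-\}_{M_\sigma}:M_\sigma\times\Lambda(a,b)\to M_\sigma$ given by $\{X^iY^j,X\}_{M_\sigma}=-(j+\alpha)X^{i+1}Y^j$, $\{X^iY^j,Y\}_{M_\sigma}=(i-\beta)X^iY^{j+1}$ (extended linearly in the first argument and by $\{m,fg\}_{M_\sigma}=\{m,f\}_{M_\sigma}g+\{m,g\}_{M_\sigma}f$ in the second). Kähler forms: $\Omega^0=\Lambda(a,b)$; $\Omega^1=(\Lambda(a,b)dX\oplus\Lambda(a,b)dY)/(X^{a-1}dX,\ Y^{b-1}dY)$, with basis $X^iY^jdX$ ($0\le i\le a-2$, $0\le j\le b-1$) and $X^iY^jdY$ ($0\le i\le a-1$, $0\le j\le b-2$); $\Omega^2$ has basis $X^iY^j\,dX\wedge dY$ ($0\le i\le a-2$, $0\le j\le b-2$); $\Omega^k=0$ for $k\ge3$.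 The Poisson homology $HP_*(\Lambda(a,b),M)$ with coefficients in a right Poisson module $M$ is the homology of the complex $M\otimes_{\Lambda(a,b)}\Omega^k$ with boundary $$\partial_k(m\otimes da_1\wedge\dots\wedge da_k)=\sum_{i}(-1)^{i+1}\{m,a_i\}_M\otimes da_1\wedge\cdots\widehat{da_i}\cdots\wedge da_k+\sum_{i<j}(-1)^{i+j}m\otimes d\{a_i,a_j\}\wedge da_1\wedge\cdots\widehat{da_i}\cdots\widehat{da_j}\cdots\wedge da_k;$$ concretely $\partial_1(m\otimes dX)=\{m,X\}_M$, $\partial_1(m\otimes dY)=\{m,Y\}_M$, $\partial_2(m\otimes dX\wedge dY)=\{m,X\}_M\otimes dY-\{m,Y\}_M\otimes dX-(mX\otimes dY+mY\otimes dX)$. *)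

theory Defs
  imports Complex_Main
begin

text \<open>Elements of Lambda(a,b) (and of M_sigma, which is Lambda(a,b) as a module) are
  represented by their coefficient functions on the monomial basis X^i Y^j,
  i.e. functions nat \<times> nat \<Rightarrow> complex vanishing outside the box i < a, j < b.\<close>

type_synonym coeffs = "nat \<times> nat \<Rightarrow> complex"

definition box :: "nat \<Rightarrow> nat \<Rightarrow> (nat \<times> nat) set" where
  "box a b = {(i, j). i < a \<and> j < b}"

definition supported_in :: "(nat \<times> nat) set \<Rightarrow> coeffs set" where
  "supported_in S = {m. \<forall>p. p \<notin> S \<longrightarrow> m p = 0}"

text \<open>Carrier of M_sigma (= Lambda(a,b) = M tensor Omega^0).\<close>
definition Mcar :: "nat \<Rightarrow> nat \<Rightarrow> coeffs set" where
  "Mcar a b = supported_in (box a b)"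

text \<open>M tensor Omega^1 = Omega^1: pairs (dX-coefficients, dY-coefficients), with bases
  X^iY^j dX (i \<le> a-2, j \<le> b-1) and X^iY^j dY (i \<le> a-1, j \<le> b-2).\<close>
definition Om1car :: "nat \<Rightarrow> nat \<Rightarrow> (coeffs \<times> coeffs) set" where
  "Om1car a b = supported_in (box (a - 1) b) \<times> supported_in (box a (b - 1))"

text \<open>M tensor Omega^2 = Omega^2: coefficients of X^iY^j dX\<and>dY (i \<le> a-2, j \<le> b-2).\<close>
definition Om2car :: "nat \<Rightarrow> nat \<Rightarrow> coeffs set" where
  "Om2car a b = supported_in (box (a - 1) (b - 1))"

text \<open>The monomial X^i Y^j in Lambda(a,b) (zero if i \<ge> a or j \<ge> b).\<close>
definition mon :: "nat \<Rightarrow> nat \<Rightarrow> nat \<Rightarrow> nat \<Rightarrow> coeffs" where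
  "mon a b i j = (\<lambda>p. if p = (i, j) \<and> i < a \<and> j < b then 1 else 0)"

definition lin_ext :: "nat \<Rightarrow> nat \<Rightarrow> (nat \<Rightarrow> nat \<Rightarrow> coeffs) \<Rightarrow> coeffs \<Rightarrow> coeffs" where
  "lin_ext a b F m = (\<lambda>q. \<Sum>(i, j)\<in>box a b. m (i, j) * F i j q)"

definition brX :: "nat \<Rightarrow> nat \<Rightarrow> int \<Rightarrow> coeffs \<Rightarrow> coeffs" where
  "brX a b \<alpha> = lin_ext a b (\<lambda>i j. (\<lambda>q. - of_int (int j + \<alpha>) * mon a b (i + 1) j q))"

definition brY :: "nat \<Rightarrow> nat \<Rightarrow> int \<Rightarrow> coeffs \<Rightarrow> coeffs" where
  "brY a b \<beta> = lin_ext a b (\<lambda>i j. (\<lambda>q. of_int (int i - \<beta>) * mon a b i (j + 1) q))"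

definition mulX :: "nat \<Rightarrow> nat \<Rightarrow> coeffs \<Rightarrow> coeffs" where
  "mulX a b = lin_ext a b (\<lambda>i j. mon a b (i + 1) j)"

definition mulY :: "nat \<Rightarrow> nat \<Rightarrow> coeffs \<Rightarrow> coeffs" where
  "mulY a b = lin_ext a b (\<lambda>i j. mon a b i (j + 1))"

text \<open>Boundary maps.  d1(m dX + n dY) = {m,X} + {n,Y};
  d2(m dX\<and>dY) = {m,X} dY - {m,Y} dX - (mX dY + mY dX), returned as (dX-part, dY-part).\<close>
definition bd1 :: "nat \<Rightarrow> nat \<Rightarrow> int \<Rightarrow> int \<Rightarrow> coeffs \<times> coeffs \<Rightarrow> coeffs" where
  "bd1 a b \<alpha> \<beta> w = (\<lambda>q. brX a b \<alpha> (fst w) q + brY a b \<beta> (snd w) q)"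

definition bd2 :: "nat \<Rightarrow> nat \<Rightarrow> int \<Rightarrow> int \<Rightarrow> coeffs \<Rightarrow> coeffs \<times> coeffs" where
  "bd2 a b \<alpha> \<beta> m =
     ((\<lambda>q. - brY a b \<beta> m q - mulY a b m q),
      (\<lambda>q. brX a b \<alpha> m q - mulX a b m q))"

definition clinear_on :: "coeffs set \<Rightarrow> (coeffs \<Rightarrow> complex) \<Rightarrow> bool" where
  "clinear_on S \<phi> \<longleftrightarrow>
     (\<forall>x\<in>S. \<forall>y\<in>S. \<phi> (\<lambda>p. x p + y p) = \<phi> x + \<phi> y) \<and>
     (\<forall>c. \<forall>x\<in>S. \<phi> (\<lambda>p. c * x p) = c * \<phi> x)"

end

theory Submission
  imports Defs
begin

(* On the monomial basis every map in the complex is a weighted shift: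
   {X^iY^j, X} = -(j+alpha) X^(i+1)Y^j, {X^iY^j, Y} = (i-beta) X^iY^(j+1), and
   multiplication by X or Y shifts without weight.  Hence
   - HP_0: the image of d1 consists of the elements with vanishing constant term,
     as soon as the weights j+alpha (j < b) and beta are nonzero: d1 never reaches
     the monomial 1, and X^(i+1)Y^j = d1(X^iY^j dX / -(j+alpha)),
     Y^(j+1) = d1(Y^j dY / -beta).  So m |-> m(0,0) identifies HP_0 with C.
   - HP_2: the dY-component of d2(m dX/\dY) at X^(i+1)Y^j is -(j+alpha+1) m(i,j),
     so d2 is injective as soon as the weights j+alpha+1 (j < b-1) are nonzero. *)

lemma finite_box: "finite (box a b)"
proof -
  have "box a b \<subseteq> {..<a} \<times> {..<b}" by (auto simp: box_def)
  thus ?thesis by (rule finite_subset) auto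
qed

lemma lin_ext_shiftX:
  "lin_ext a b (\<lambda>i j q. G i j * mon a b (i+1) j q) m (i', j') =
   (if 0 < i' \<and> i' < a \<and> j' < b then m (i'-1, j') * G (i'-1) j' else 0)"
proof -
  have "lin_ext a b (\<lambda>i j q. G i j * mon a b (i+1) j q) m (i', j') =
        (\<Sum>p\<in>box a b. if p = (i'-1, j') \<and> 0 < i' \<and> i' < a \<and> j' < b
                       then m (i'-1, j') * G (i'-1) j' else 0)"
    unfolding lin_ext_def
    by (rule sum.cong) (auto simp: mon_def box_def split: if_splits)
  also have "\<dots> = (if 0 < i' \<and> i' < a \<and> j' < b then m (i'-1, j') * G (i'-1) j' else 0)"
    using finite_box[of a b] by (auto simp: box_def sum.delta')
  finally show ?thesis .
qed

lemma lin_ext_shiftY: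
  "lin_ext a b (\<lambda>i j q. G i j * mon a b i (j+1) q) m (i', j') =
   (if i' < a \<and> 0 < j' \<and> j' < b then m (i', j'-1) * G i' (j'-1) else 0)"
proof -
  have "lin_ext a b (\<lambda>i j q. G i j * mon a b i (j+1) q) m (i', j') =
        (\<Sum>p\<in>box a b. if p = (i', j'-1) \<and> i' < a \<and> 0 < j' \<and> j' < b
                       then m (i', j'-1) * G i' (j'-1) else 0)"
    unfolding lin_ext_def
    by (rule sum.cong) (auto simp: mon_def box_def split: if_splits)
  also have "\<dots> = (if i' < a \<and> 0 < j' \<and> j' < b then m (i', j'-1) * G i' (j'-1) else 0)"
    using finite_box[of a b] by (auto simp: box_def sum.delta')
  finally show ?thesis .
qed

lemma brX_eq: "brX a b \<alpha> m (i, j) =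
   (if 0 < i \<and> i < a \<and> j < b then m (i-1, j) * (- of_int (int j + \<alpha>)) else 0)"
  unfolding brX_def using lin_ext_shiftX[where G="\<lambda>i j. - of_int (int j + \<alpha>)"] by simp

lemma brY_eq: "brY a b \<beta> m (i, j) =
   (if i < a \<and> 0 < j \<and> j < b then m (i, j-1) * of_int (int i - \<beta>) else 0)"
  unfolding brY_def using lin_ext_shiftY[where G="\<lambda>i j. of_int (int i - \<beta>)"] by simp

lemma mulX_eq: "mulX a b m (i, j) = (if 0 < i \<and> i < a \<and> j < b then m (i-1, j) else 0)"
  using lin_ext_shiftX[where G="\<lambda>i j. 1" and a=a and b=b and m=m and i'=i and j'=j]
  unfolding mulX_def by simp

lemma bd1_in_Mcar: "bd1 a b \<alpha> \<beta> w \<in> Mcar a b"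
  by (auto simp: Mcar_def supported_in_def box_def bd1_def brX_eq brY_eq)

lemma bd1_constant_term: "bd1 a b \<alpha> \<beta> w (0, 0) = 0"
  by (simp add: bd1_def brX_eq brY_eq)

text \<open>Conversely, with nonzero weights every element with zero constant term is a
  boundary: divide X^(i+1)Y^j by its X-weight and Y^(j+1) by its Y-weight at i = 0.\<close>
lemma bd1_preimage:
  assumes wX: "\<And>j. j < b \<Longrightarrow> int j + \<alpha> \<noteq> 0" and wY: "\<beta> \<noteq> 0"
    and m: "m \<in> Mcar a b" and m0: "m (0, 0) = 0"
  shows "m \<in> bd1 a b \<alpha> \<beta> ` Om1car a b"
proof -
  have m_out: "m (i, j) = 0" if "\<not> (i < a \<and> j < b)" for i j
    using m that by (auto simp: Mcar_def supported_in_def box_def)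
  define u where "u = (\<lambda>(i, j). if i < a - 1 \<and> j < b
                          then m (i+1, j) / (- of_int (int j + \<alpha>)) else (0::complex))"
  define v where "v = (\<lambda>(i::nat, j). if i = 0 \<and> j < b - 1
                          then m (0, j+1) / of_int (0 - \<beta>) else (0::complex))"
  have uv: "(u, v) \<in> Om1car a b"
    by (auto simp: Om1car_def supported_in_def box_def u_def v_def m_out)
  have "bd1 a b \<alpha> \<beta> (u, v) (i, j) = m (i, j)" for i j
  proof (cases "i < a \<and> j < b")
    case False
    thus ?thesis by (auto simp: bd1_def brX_eq brY_eq m_out)
  next
    case inside: True
    consider "0 < i" | "i = 0" "0 < j" | "i = 0" "j = 0" by blast
    thus ?thesis
    proof cases
      case 1
      define c :: complex where "c = - of_int (int j + \<alpha>)"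
      have "c \<noteq> 0" using wX inside unfolding c_def by (metis neg_equal_0_iff_equal of_int_eq_0_iff)
      moreover have "u (i - 1, j) = m (i, j) / c"
      proof -
        have "i - 1 < a - 1" and "i - 1 + 1 = i" using 1 inside by auto
        thus ?thesis using inside unfolding c_def by (simp only: u_def case_prod_conv if_True simp_thms)
      qed
      moreover have "brX a b \<alpha> u (i, j) = u (i - 1, j) * c"
        using 1 inside by (simp add: brX_eq c_def)
      moreover have "brY a b \<beta> v (i, j) = 0" using 1 by (simp add: brY_eq v_def)
      ultimately show ?thesis by (simp add: bd1_def)
    next
      case 2
      thus ?thesis using inside wY by (auto simp: bd1_def brX_eq brY_eq v_def)
    next
      case 3
      thus ?thesis using m0 by (simp add: bd1_def brX_eq brY_eq)
    qed
  qed
  hence "bd1 a b \<alpha> \<beta> (u, v) = m" by auto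
  with uv show ?thesis by (metis image_eqI)
qed

lemma bd1_image:
  assumes "\<And>j. j < b \<Longrightarrow> int j + \<alpha> \<noteq> 0" and "\<beta> \<noteq> 0"
  shows "bd1 a b \<alpha> \<beta> ` Om1car a b = {m \<in> Mcar a b. m (0, 0) = 0}"
  using bd1_preimage[OF assms] bd1_in_Mcar bd1_constant_term by blast

lemma constant_term_linear: "clinear_on S (\<lambda>m. m (0, 0))"
  by (simp add: clinear_on_def)

lemma constant_term_surj:
  assumes "0 < a" and "0 < b"
  shows "(\<lambda>m. m (0, 0)) ` Mcar a b = UNIV"
proof (intro set_eqI iffI)
  fix c :: complex
  have "(\<lambda>p. if p = (0, 0) then c else 0) \<in> Mcar a b"
    using assms by (auto simp: Mcar_def supported_in_def box_def)
  thus "c \<in> (\<lambda>m. m (0, 0)) ` Mcar a b" by (rule rev_image_eqI) simp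
qed simp

text \<open>The dY-component of d2(m dX/\dY) at X^(i+1)Y^j is -(j+alpha+1) m(i,j):
  the bracket with X and the multiplication by X shift m the same way.\<close>
lemma bd2_dY_component:
  assumes "i < a - 1" and "j < b"
  shows "snd (bd2 a b \<alpha> \<beta> m) (i+1, j) = - of_int (int j + \<alpha> + 1) * m (i, j)"
proof -
  have "0 < i + 1 \<and> i + 1 < a \<and> j < b" using assms by simp
  thus ?thesis by (simp only: bd2_def snd_conv brX_eq mulX_eq if_True) (simp add: algebra_simps)
qed

lemma bd2_injective:
  assumes w: "\<And>j. j < b - 1 \<Longrightarrow> int j + \<alpha> + 1 \<noteq> 0"
    and m: "m \<in> Om2car a b" and cycle: "bd2 a b \<alpha> \<beta> m = ((\<lambda>_. 0), (\<lambda>_. 0))"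
  shows "m = (\<lambda>_. 0)"
proof
  fix p :: "nat \<times> nat"
  obtain i j where p: "p = (i, j)" by fastforce
  show "m p = 0"
  proof (cases "i < a - 1 \<and> j < b - 1")
    case False
    thus ?thesis using m by (auto simp: p Om2car_def supported_in_def box_def)
  next
    case True
    have "of_int (int j + \<alpha> + 1) \<noteq> (0::complex)" using w True by (metis of_int_eq_0_iff)
    moreover have "- of_int (int j + \<alpha> + 1) * m (i, j) = 0"
      using bd2_dY_component[of i a j b \<alpha> \<beta> m] True cycle by (simp add: less_diff_conv)
    ultimately show ?thesis unfolding p by (metis mult_eq_0_iff neg_equal_0_iff_equal)
  qed
qed

theorem mainTheorem6:
  fixes a b :: nat and \<alpha> \<beta> :: int
  assumes "a \<ge> 2" and "b \<ge> 2"
    and "\<alpha> < - int b + 1" and "\<beta> > int a - 1"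
  shows "(\<exists>\<phi>. clinear_on (Mcar a b) \<phi> \<and> \<phi> ` Mcar a b = UNIV \<and>
             {m \<in> Mcar a b. \<phi> m = 0} = bd1 a b \<alpha> \<beta> ` Om1car a b)
         \<and> (\<forall>m \<in> Om2car a b. bd2 a b \<alpha> \<beta> m = ((\<lambda>_. 0), (\<lambda>_. 0)) \<longrightarrow> m = (\<lambda>_. 0))"
proof
  have wX: "int j + \<alpha> \<noteq> 0" if "j < b" for j using that assms by simp
  have wY: "\<beta> \<noteq> 0" using assms by simp
  have wXY: "int j + \<alpha> + 1 \<noteq> 0" if "j < b - 1" for j using that assms by simp
  show "\<exists>\<phi>. clinear_on (Mcar a b) \<phi> \<and> \<phi> ` Mcar a b = UNIV \<and>
             {m \<in> Mcar a b. \<phi> m = 0} = bd1 a b \<alpha> \<beta> ` Om1car a b"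
    using constant_term_linear constant_term_surj[of a b] bd1_image[OF wX wY] assms(1,2)
    by (intro exI[where x="\<lambda>m. m (0, 0)"]) auto
  show "\<forall>m \<in> Om2car a b. bd2 a b \<alpha> \<beta> m = ((\<lambda>_. 0), (\<lambda>_. 0)) \<longrightarrow> m = (\<lambda>_. 0)"
    using bd2_injective[OF wXY] by blast
qed

end
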